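(* Let $n\ge1$ and for each $i\in[n]$ let $X_i$ have the $\mathrm{Beta}(i,n-i+1)$ distribution, with arbitrary joint distribution. Then for $0<s\le n/2$ the value $t(n,s)$ defined by $s=\sum_{i=1}^n\int_0^{t(n,s)}x\,dF_i(x)$ ($F_i$ the distribution function of $X_i$) equals $(2s/n)^{1/2}$, and $$ \mathbb{E}\Big[\max\Big\{|A|: A\subset[n],\ \sum_{i\in A}X_i\le 1\Big\}\Big]\le \sqrt{2n}. $$ *)

theory Defs
  imports "HOL-Probability.Probability"
begin

definition beta_density :: "real \<Rightarrow> real \<Rightarrow> real \<Rightarrow> real" where
  "beta_density a b x =
     (if 0 < x \<and> x < 1 then x powr (a - 1) * (1 - x) powr (b - 1) / Beta a b else 0)"

definition max_fit :: "nat \<Rightarrow> (nat \<Rightarrow> 'a \<Rightarrow> real) \<Rightarrow> 'a \<Rightarrow> nat" where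
  "max_fit n X \<omega> = Max {card A | A. A \<subseteq> {1..n} \<and> (\<Sum>i\<in>A. X i \<omega>) \<le> 1}"

end

theory Submission imports Defs begin

text \<open>
  The densities of Beta(i, n - i + 1), i = 1..n, are n times the Bernstein basis polynomials of
  degree n - 1, so on (0,1) they sum to n. Hence, whatever the joint law, sum_i E h(X_i) equals
  n times the integral of h over (0,1) for every h \<ge> 0; with h(x) = x 1[0,t](x) this is n t^2/2,
  the first claim. For the second, every i in a feasible set A satisfies
  1 \<le> max 0 (1 - X_i/t) + X_i/t, and sum_{i in A} X_i \<le> 1, so
  |A| \<le> sum_i max 0 (1 - X_i/t) + 1/t. Taking expectations gives n t/2 + 1/t,
  which equals sqrt (2 n) for t = sqrt (2/n).
\<close>

lemma Beta_pos:
  fixes a b :: real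
  assumes "0 < a" "0 < b"
  shows "0 < Beta a b"
  using assms by (simp add: Beta_def Gamma_real_pos)

lemma Beta_of_nat:
  "Beta (real (Suc j)) (real (Suc k)) = fact j * fact k / fact (j + k + 1)"
proof -
  have "real (Suc j) + real (Suc k) = 1 + real (j + k + 1)" by simp
  then show ?thesis
    unfolding Beta_def using Gamma_fact[where 'a=real] by (simp only: of_nat_Suc add.commute)
qed

lemma beta_density_nonneg:
  assumes "0 < a" "0 < b"
  shows "0 \<le> beta_density a b x"
  using Beta_pos[OF assms] by (simp add: beta_density_def)

lemma beta_density_of_nat:
  assumes "0 < x" "x < 1"
  shows "beta_density (real (Suc j)) (real (Suc k)) x
       = real (j + k + 1) * real ((j + k) choose j) * x ^ j * (1 - x) ^ k"
proof -
  have "fact (j + k) = real ((j + k) choose j) * fact j * fact k"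
    using binomial_fact[of j "j + k", where 'a=real] by (simp add: field_simps)
  then have "fact (j + k + 1) = real (j + k + 1) * real ((j + k) choose j) * fact j * fact k"
    by (simp only: Suc_eq_plus1[symmetric] fact_Suc)
  then show ?thesis
    unfolding beta_density_def Beta_of_nat using assms by (simp add: powr_realpow)
qed

lemma sum_beta_density_order_statistics:
  assumes "1 \<le> n"
  shows "(\<Sum>i=1..n. beta_density (real i) (real (n - i + 1)) x) = real n * indicator {0<..<1} x"
proof (cases "0 < x \<and> x < 1")
  case True
  obtain m where n: "n = Suc m" using assms by (cases n) auto
  have "(\<Sum>i=1..n. beta_density (real i) (real (n - i + 1)) x)
      = (\<Sum>j=0..m. beta_density (real (Suc j)) (real (n - Suc j + 1)) x)"
    using sum.shift_bounds_cl_Suc_ivl[of "\<lambda>i. beta_density (real i) (real (n - i + 1)) x" 0 m]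
    by (simp add: n)
  also have "\<dots> = (\<Sum>j=0..m. real n * (real (m choose j) * x ^ j * (1 - x) ^ (m - j)))"
  proof (rule sum.cong[OF refl])
    fix j assume "j \<in> {0..m}"
    then show "beta_density (real (Suc j)) (real (n - Suc j + 1)) x
             = real n * (real (m choose j) * x ^ j * (1 - x) ^ (m - j))"
      using True beta_density_of_nat[of x j "m - j"] by (simp add: n Suc_diff_le)
  qed
  also have "\<dots> = real n * (x + (1 - x)) ^ m"
    unfolding binomial_ring[of x "1 - x" m] sum_distrib_left atLeast0AtMost by simp
  finally show ?thesis
    using True by simp
next
  case False
  then have "\<And>a b. beta_density a b x = 0"
    unfolding beta_density_def by auto
  with False show ?thesis
    by simp
qed

lemma sum_nn_integral_order_statistics:
  assumes "1 \<le> n"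
    and distr: "\<And>i. i \<in> {1..n} \<Longrightarrow>
      distributed M lborel (X i) (\<lambda>x. ennreal (beta_density (real i) (real (n - i + 1)) x))"
    and h: "h \<in> borel_measurable borel"
  shows "(\<Sum>i=1..n. \<integral>\<^sup>+\<omega>. h (X i \<omega>) \<partial>M) = ennreal (real n) * (\<integral>\<^sup>+x\<in>{0<..<1}. h x \<partial>lborel)"
proof -
  let ?f = "\<lambda>i x. ennreal (beta_density (real i) (real (n - i + 1)) x)"
  have f_meas: "?f i \<in> borel_measurable lborel" if "i \<in> {1..n}" for i
    using distributed_borel_measurable[OF distr[OF that]] .
  have h_meas: "h \<in> borel_measurable lborel"
    using h by simp
  have "(\<Sum>i=1..n. \<integral>\<^sup>+\<omega>. h (X i \<omega>) \<partial>M) = (\<Sum>i=1..n. \<integral>\<^sup>+x. ?f i x * h x \<partial>lborel)"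
    using distributed_nn_integral[OF distr h_meas] by simp
  also have "\<dots> = (\<integral>\<^sup>+x. (\<Sum>i=1..n. ?f i x) * h x \<partial>lborel)"
    unfolding sum_distrib_right using f_meas h_meas by (intro nn_integral_sum[symmetric]) auto
  also have "\<dots> = (\<integral>\<^sup>+x. ennreal (real n) * (h x * indicator {0<..<1} x) \<partial>lborel)"
  proof (rule nn_integral_cong)
    fix x :: real
    have "(\<Sum>i=1..n. ?f i x) = ennreal (\<Sum>i=1..n. beta_density (real i) (real (n - i + 1)) x)"
      by (rule sum_ennreal) (simp add: beta_density_nonneg)
    also have "\<dots> = ennreal (real n * indicator {0<..<1} x)"
      using sum_beta_density_order_statistics[OF assms(1)] by simp
    finally show "(\<Sum>i=1..n. ?f i x) * h x = ennreal (real n) * (h x * indicator {0<..<1} x)"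
      by (simp add: ennreal_mult ennreal_indicator mult_ac)
  qed
  also have "\<dots> = ennreal (real n) * (\<integral>\<^sup>+x\<in>{0<..<1}. h x \<partial>lborel)"
    using h_meas by (simp add: nn_integral_cmult)
  finally show ?thesis .
qed

lemma set_nn_integral_unit_interval_has_integral:
  fixes t :: real and f :: "real \<Rightarrow> real"
  assumes "0 \<le> t" "t \<le> 1" "\<And>x. x \<in> {0..t} \<Longrightarrow> 0 \<le> f x" "(f has_integral I) {0..t}"
  shows "(\<integral>\<^sup>+x\<in>{0<..<1}. ennreal (indicator {0..t} x * f x) \<partial>lborel) = ennreal I"
proof -
  have "AE x in lborel. ennreal (indicator {0..t} x * f x) * indicator {0<..<1} x
                      = ennreal (f x) * indicator {0..t} x"
    using AE_lborel_singleton[of 0] AE_lborel_singleton[of 1]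
    by eventually_elim (use assms(1,2) in \<open>auto split: split_indicator\<close>)
  then have "(\<integral>\<^sup>+x\<in>{0<..<1}. ennreal (indicator {0..t} x * f x) \<partial>lborel)
           = (\<integral>\<^sup>+x. ennreal (f x) * indicator {0..t} x \<partial>lborel)"
    by (rule nn_integral_cong_AE)
  also have "\<dots> = ennreal I"
    using assms(3,4) by (rule nn_integral_has_integral_lebesgue')
  finally show ?thesis .
qed

lemma set_nn_integral_unit_interval_truncated_identity:
  fixes t :: real
  assumes "0 \<le> t" "t \<le> 1"
  shows "(\<integral>\<^sup>+x\<in>{0<..<1}. ennreal (indicator {0..t} x * x) \<partial>lborel) = ennreal (t\<^sup>2 / 2)"
  using set_nn_integral_unit_interval_has_integral[OF assms _ ident_has_integral[OF assms(1)]]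
  by simp

lemma set_nn_integral_unit_interval_hinge:
  fixes t :: real
  assumes "0 < t" "t \<le> 1"
  shows "(\<integral>\<^sup>+x\<in>{0<..<1}. ennreal (max 0 (1 - x / t)) \<partial>lborel) = ennreal (t / 2)"
proof -
  have t_half: "t - (t\<^sup>2 / 2) / t = t / 2"
    using assms(1) by (simp add: power2_eq_square)
  have "((\<lambda>x. 1 - x / t) has_integral t / 2) {0..t}"
    unfolding t_half[symmetric]
    using has_integral_diff[OF has_integral_const_real[of 1 0 t]
                               has_integral_divide[OF ident_has_integral[of 0 t], of t]] assms(1)
    by simp
  then have "(\<integral>\<^sup>+x\<in>{0<..<1}. ennreal (indicator {0..t} x * (1 - x / t)) \<partial>lborel)
                 = ennreal (t / 2)"
    using assms by (intro set_nn_integral_unit_interval_has_integral) auto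
  moreover have "(\<integral>\<^sup>+x\<in>{0<..<1}. ennreal (max 0 (1 - x / t)) \<partial>lborel)
               = (\<integral>\<^sup>+x\<in>{0<..<1}. ennreal (indicator {0..t} x * (1 - x / t)) \<partial>lborel)"
    using assms(1) by (intro set_nn_integral_cong) (auto simp: indicator_def max_def field_simps)
  ultimately show ?thesis
    by simp
qed

lemma ennreal_set_integral_truncated_identity:
  fixes N :: "real measure" and t :: real
  assumes "prob_space N" "sets N = sets borel" "0 \<le> t"
  shows "ennreal (LINT x:{0..t}|N. x) = (\<integral>\<^sup>+x. ennreal (indicator {0..t} x * x) \<partial>N)"
proof -
  interpret prob_space N by fact
  have "integrable N (\<lambda>x. indicator {0..t} x *\<^sub>R x)"
    using assms by (intro integrable_const_bound[where B=t]) (auto simp: indicator_def)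
  then show ?thesis
    unfolding set_lebesgue_integral_def by (subst nn_integral_eq_integral) (auto simp: indicator_def)
qed

lemma sum_truncated_mean_order_statistics:
  fixes t :: real
  assumes "prob_space M" "1 \<le> n"
    and distr: "\<And>i. i \<in> {1..n} \<Longrightarrow>
      distributed M lborel (X i) (\<lambda>x. ennreal (beta_density (real i) (real (n - i + 1)) x))"
    and "0 \<le> t" "t \<le> 1"
  shows "(\<Sum>i=1..n. LINT x:{0..t}|distr M lborel (X i). x) = real n * t\<^sup>2 / 2"
proof -
  have truncated_mean: "ennreal (LINT x:{0..t}|distr M lborel (X i). x)
            = (\<integral>\<^sup>+\<omega>. ennreal (indicator {0..t} (X i \<omega>) * X i \<omega>) \<partial>M)"
    if i: "i \<in> {1..n}" for i
  proof -
    have X_meas: "X i \<in> borel_measurable M"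
      using distributed_measurable[OF distr[OF i]] by simp
    have "prob_space (distr M lborel (X i))"
      using X_meas by (intro prob_space.prob_space_distr[OF assms(1)]) simp
    then show ?thesis
      using X_meas assms(4) by (simp add: ennreal_set_integral_truncated_identity nn_integral_distr)
  qed
  have nonneg: "0 \<le> (LINT x:{0..t}|distr M lborel (X i). x)" for i
    unfolding set_lebesgue_integral_def by (rule integral_nonneg_AE) (auto simp: indicator_def)
  have "ennreal (\<Sum>i=1..n. LINT x:{0..t}|distr M lborel (X i). x)
      = (\<Sum>i=1..n. \<integral>\<^sup>+\<omega>. ennreal (indicator {0..t} (X i \<omega>) * X i \<omega>) \<partial>M)"
    using nonneg truncated_mean by (simp flip: sum_ennreal)
  also have "\<dots> = ennreal (real n) * ennreal (t\<^sup>2 / 2)"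
    using set_nn_integral_unit_interval_truncated_identity[OF assms(4,5)]
    by (subst sum_nn_integral_order_statistics[OF assms(2) distr]) simp_all
  also have "\<dots> = ennreal (real n * t\<^sup>2 / 2)"
    by (simp flip: ennreal_mult)
  finally show ?thesis
    using nonneg assms(4) by (subst (asm) ennreal_inj) (auto intro: sum_nonneg)
qed

lemma max_fit_witness:
  obtains A where "max_fit n X \<omega> = card A" "A \<subseteq> {1..n}" "(\<Sum>i\<in>A. X i \<omega>) \<le> 1"
proof -
  let ?S = "{card A | A. A \<subseteq> {1..n} \<and> (\<Sum>i\<in>A. X i \<omega>) \<le> 1}"
  have "finite ?S"
    by (rule finite_subset[of _ "card ` Pow {1..n}"]) auto
  moreover have "card {} \<in> ?S"
    by force
  ultimately have "Max ?S \<in> ?S"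
    by (intro Max_in) auto
  then show ?thesis
    using that unfolding max_fit_def by auto
qed

lemma max_fit_le: "max_fit n X \<omega> \<le> n"
proof -
  obtain A where "max_fit n X \<omega> = card A" "A \<subseteq> {1..n}"
    by (rule max_fit_witness)
  then show ?thesis
    using card_mono[of "{1..n}" A] by simp
qed

lemma max_fit_le_sum_hinge:
  fixes t :: real
  assumes "0 < t"
  shows "real (max_fit n X \<omega>) \<le> (\<Sum>i=1..n. max 0 (1 - X i \<omega> / t)) + 1 / t"
proof -
  obtain A where A: "max_fit n X \<omega> = card A" "A \<subseteq> {1..n}" "(\<Sum>i\<in>A. X i \<omega>) \<le> 1"
    by (rule max_fit_witness)
  have "real (card A) \<le> (\<Sum>i\<in>A. max 0 (1 - X i \<omega> / t) + X i \<omega> / t)"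
    unfolding real_of_card by (rule sum_mono) simp
  also have "\<dots> = (\<Sum>i\<in>A. max 0 (1 - X i \<omega> / t)) + (\<Sum>i\<in>A. X i \<omega>) / t"
    by (simp add: sum.distrib sum_divide_distrib)
  also have "\<dots> \<le> (\<Sum>i=1..n. max 0 (1 - X i \<omega> / t)) + 1 / t"
    using A(2,3) assms by (intro add_mono sum_mono2 divide_right_mono) auto
  finally show ?thesis
    using A(1) by simp
qed

lemma nn_integral_max_fit_le:
  fixes t :: real
  assumes "prob_space M" "1 \<le> n"
    and distr: "\<And>i. i \<in> {1..n} \<Longrightarrow>
      distributed M lborel (X i) (\<lambda>x. ennreal (beta_density (real i) (real (n - i + 1)) x))"
    and "0 < t" "t \<le> 1"
  shows "(\<integral>\<^sup>+\<omega>. ennreal (real (max_fit n X \<omega>)) \<partial>M) \<le> ennreal (real n * t / 2 + 1 / t)"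
proof -
  let ?g = "\<lambda>x. ennreal (max 0 (1 - x / t))"
  have g_meas: "(\<lambda>\<omega>. ?g (X i \<omega>)) \<in> borel_measurable M" if "i \<in> {1..n}" for i
    using distributed_measurable[OF distr[OF that]] by simp
  have "(\<integral>\<^sup>+\<omega>. ennreal (real (max_fit n X \<omega>)) \<partial>M)
      \<le> (\<integral>\<^sup>+\<omega>. (\<Sum>i=1..n. ?g (X i \<omega>)) + ennreal (1 / t) \<partial>M)"
  proof (rule nn_integral_mono)
    fix \<omega>
    have "ennreal (real (max_fit n X \<omega>)) \<le> ennreal ((\<Sum>i=1..n. max 0 (1 - X i \<omega> / t)) + 1 / t)"
      using max_fit_le_sum_hinge[OF assms(4)] by (rule ennreal_leI)
    also have "\<dots> = (\<Sum>i=1..n. ?g (X i \<omega>)) + ennreal (1 / t)"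
      using assms(4) by (simp add: ennreal_plus sum_nonneg sum_ennreal del: ennreal_max_0)
    finally show "ennreal (real (max_fit n X \<omega>)) \<le> (\<Sum>i=1..n. ?g (X i \<omega>)) + ennreal (1 / t)" .
  qed
  also have "\<dots> = (\<integral>\<^sup>+\<omega>. (\<Sum>i=1..n. ?g (X i \<omega>)) \<partial>M) + ennreal (1 / t)"
    using g_meas prob_space.emeasure_space_1[OF assms(1)] by (subst nn_integral_add) auto
  also have "\<dots> = (\<Sum>i=1..n. \<integral>\<^sup>+\<omega>. ?g (X i \<omega>) \<partial>M) + ennreal (1 / t)"
    by (simp only: nn_integral_sum[OF g_meas])
  also have "\<dots> = ennreal (real n) * ennreal (t / 2) + ennreal (1 / t)"
    using set_nn_integral_unit_interval_hinge[OF assms(4,5)]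
    by (subst sum_nn_integral_order_statistics[OF assms(2) distr]) (simp_all del: ennreal_max_0)
  also have "\<dots> = ennreal (real n * t / 2 + 1 / t)"
    using assms(4) by (simp flip: ennreal_mult)
  finally show ?thesis .
qed

lemma nn_integral_max_fit_le_sqrt:
  assumes "prob_space M" "1 \<le> n"
    and distr: "\<And>i. i \<in> {1..n} \<Longrightarrow>
      distributed M lborel (X i) (\<lambda>x. ennreal (beta_density (real i) (real (n - i + 1)) x))"
  shows "(\<integral>\<^sup>+\<omega>. ennreal (real (max_fit n X \<omega>)) \<partial>M) \<le> ennreal (sqrt (2 * real n))"
proof (cases "n = 1")
  case True
  have "(\<integral>\<^sup>+\<omega>. ennreal (real (max_fit n X \<omega>)) \<partial>M) \<le> (\<integral>\<^sup>+\<omega>. 1 \<partial>M)"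
    using max_fit_le[of n X] True by (intro nn_integral_mono) simp
  also have "\<dots> = 1"
    using prob_space.emeasure_space_1[OF assms(1)] by simp
  also have "\<dots> \<le> ennreal (sqrt (2 * real n))"
    unfolding ennreal_1[symmetric] using True by (intro ennreal_leI) simp
  finally show ?thesis .
next
  case False
  define t where "t = sqrt (2 / real n)"
  have "0 < t" "t \<le> 1"
    using False assms(2) by (simp_all add: t_def)
  have "t\<^sup>2 = 2 / real n"
    using assms(2) by (simp add: t_def)
  then have "(real n * t / 2 + 1 / t)\<^sup>2 = 2 * real n"
    using \<open>0 < t\<close> assms(2) by (simp add: field_simps power2_eq_square)
  then have "real n * t / 2 + 1 / t = sqrt (2 * real n)"
    using \<open>0 < t\<close> by (intro real_sqrt_unique[symmetric]) auto
  with nn_integral_max_fit_le[OF assms \<open>0 < t\<close> \<open>t \<le> 1\<close>] show ?thesis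
    by simp
qed

theorem mainTheorem7:
  fixes M :: "'a measure" and X :: "nat \<Rightarrow> 'a \<Rightarrow> real" and n :: nat
  assumes "prob_space M"
    and "n \<ge> 1"
    and "\<And>i. i \<in> {1..n} \<Longrightarrow>
           distributed M lborel (X i)
             (\<lambda>x. ennreal (beta_density (real i) (real (n - i + 1)) x))"
  shows "(\<forall>s::real. 0 < s \<and> s \<le> real n / 2 \<longrightarrow>
            (\<forall>t::real. 0 \<le> t \<and> t \<le> 1 \<longrightarrow>
               ((\<Sum>i=1..n. (LINT x:{0..t}|distr M lborel (X i). x)) = s
                 \<longleftrightarrow> t = sqrt (2 * s / real n))))
         \<and> (\<integral>\<^sup>+ \<omega>. ennreal (real (max_fit n X \<omega>)) \<partial>M) \<le> ennreal (sqrt (2 * real n))"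
proof -
  have "(\<Sum>i=1..n. LINT x:{0..t}|distr M lborel (X i). x) = s \<longleftrightarrow> t = sqrt (2 * s / real n)"
    if "0 \<le> t" "t \<le> 1" for s t :: real
  proof -
    have "real n * t\<^sup>2 / 2 = s \<longleftrightarrow> t\<^sup>2 = 2 * s / real n"
      using assms(2) by (auto simp: field_simps)
    also have "\<dots> \<longleftrightarrow> t = sqrt (2 * s / real n)"
      using \<open>0 \<le> t\<close> real_sqrt_unique by fastforce
    finally show ?thesis
      by (simp only: sum_truncated_mean_order_statistics[OF assms that])
  qed
  then show ?thesis
    using nn_integral_max_fit_le_sqrt[OF assms] by blast
qed

end
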